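(* Let $n\geq 2$ and let $k,l$ be integers with $0\leq l\leq k\leq n$. Let $(k,l)'$ denote the partition conjugate to $(k,l)$ (so its Young diagram has at most two columns, of lengths $k$ and $l$). Then the sign representation of $S_n$ occurs in the restriction of $W_{(k,l)'}(\mathbb C^n)$ to $S_n$ if and only if $(k,l)\in\{(n-1,0),(n,0),(n-1,1),(n,1)\}$. In each of these four cases it occurs with multiplicity exactly one.
   Context: For a partition $\lambda$ with at most $n$ parts, $W_\lambda(\mathbb C^n)$ denotes the irreducible polynomial representation (Weyl module) of $GL_n(\mathbb C)$ indexed by $\lambda$. $S_n$ is regarded as the subgroup of permutation matrices of $GL_n(\mathbb C)$, and "occurs in $W_\lambda(\mathbb C^n)$" refers to the decomposition of the restriction of $W_\lambda(\mathbb C^n)$ to this subgroup into irreducible $S_n$-representations. *)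

theory Defs
  imports Complex_Main "HOL-Library.Function_Algebras" "HOL-Combinatorics.Permutations"
begin

(* Partitions are lists of naturals (weakly decreasing).  Conjugate partition:
   the j-th part (j = 0,1,...) counts the parts of lambda exceeding j. *)
definition conj_part :: "nat list \<Rightarrow> nat list" where
  "conj_part lam = map (\<lambda>j. length (filter (\<lambda>x. j < x) lam)) [0..<Max (insert 0 (set lam))]"

(* Young diagram of lam with its cells numbered 0..d-1 in row-reading order
   (d = |lam|): row and column of cell number x. *)
definition row_of :: "nat list \<Rightarrow> nat \<Rightarrow> nat" where
  "row_of lam x = card {i. i < length lam \<and> sum_list (take (Suc i) lam) \<le> x}"

definition col_of :: "nat list \<Rightarrow> nat \<Rightarrow> nat" where
  "col_of lam x = x - sum_list (take (row_of lam x) lam)"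

definition row_group :: "nat list \<Rightarrow> (nat \<Rightarrow> nat) set" where
  "row_group lam = {p. p permutes {..<sum_list lam} \<and>
      (\<forall>x < sum_list lam. row_of lam (p x) = row_of lam x)}"

definition col_group :: "nat list \<Rightarrow> (nat \<Rightarrow> nat) set" where
  "col_group lam = {p. p permutes {..<sum_list lam} \<and>
      (\<forall>x < sum_list lam. col_of lam (p x) = col_of lam x)}"

(* Tensor power (C^n)^{\<otimes> d}: a tensor is its coordinate function on the basis
   e_{w 0} \<otimes> ... \<otimes> e_{w (d-1)}, indexed by words w : {..<d} \<rightarrow> {..<n}
   (extensional functions). *)
definition words :: "nat \<Rightarrow> nat \<Rightarrow> (nat \<Rightarrow> nat) set" where
  "words n d = Pi\<^sub>E {..<d} (\<lambda>_. {..<n})"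

definition tensors :: "nat \<Rightarrow> nat \<Rightarrow> ((nat \<Rightarrow> nat) \<Rightarrow> complex) set" where
  "tensors n d = {f. \<forall>w. w \<notin> words n d \<longrightarrow> f w = 0}"

definition pos_act :: "nat \<Rightarrow> nat \<Rightarrow> (nat \<Rightarrow> nat) \<Rightarrow> ((nat \<Rightarrow> nat) \<Rightarrow> complex) \<Rightarrow> ((nat \<Rightarrow> nat) \<Rightarrow> complex)" where
  "pos_act n d p f = (\<lambda>w. if w \<in> words n d then f (restrict (w \<circ> p) {..<d}) else 0)"

definition young_sym :: "nat list \<Rightarrow> nat \<Rightarrow> ((nat \<Rightarrow> nat) \<Rightarrow> complex) \<Rightarrow> ((nat \<Rightarrow> nat) \<Rightarrow> complex)" where
  "young_sym lam n f = (\<lambda>w. \<Sum>c\<in>col_group lam. \<Sum>r\<in>row_group lam.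
      of_int (sign c) * pos_act n (sum_list lam) c (pos_act n (sum_list lam) r f) w)"

definition weyl_module :: "nat list \<Rightarrow> nat \<Rightarrow> ((nat \<Rightarrow> nat) \<Rightarrow> complex) set" where
  "weyl_module lam n = young_sym lam n ` tensors n (sum_list lam)"

(* action of the permutation matrix of sigma (sigma permutes {..<n}) on tensors:
   e_{w} \<mapsto> e_{sigma \<circ> w} *)
definition perm_act :: "nat \<Rightarrow> nat \<Rightarrow> (nat \<Rightarrow> nat) \<Rightarrow> ((nat \<Rightarrow> nat) \<Rightarrow> complex) \<Rightarrow> ((nat \<Rightarrow> nat) \<Rightarrow> complex)" where
  "perm_act n d \<sigma> f = (\<lambda>u. if u \<in> words n d then f (restrict (inv \<sigma> \<circ> u) {..<d}) else 0)"

definition tscale :: "complex \<Rightarrow> ((nat \<Rightarrow> nat) \<Rightarrow> complex) \<Rightarrow> ((nat \<Rightarrow> nat) \<Rightarrow> complex)" where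
  "tscale c f = (\<lambda>w. c * f w)"

(* Multiplicity of the sign representation of S_n in W_lam(C^n) restricted to S_n
   = dim Hom_{S_n}(sgn, W) = dimension of the sign-isotypic subspace. *)
definition sign_multiplicity :: "nat list \<Rightarrow> nat \<Rightarrow> nat" where
  "sign_multiplicity lam n = vector_space.dim tscale
     {f \<in> weyl_module lam n. \<forall>\<sigma>. \<sigma> permutes {..<n} \<longrightarrow>
        perm_act n (sum_list lam) \<sigma> f = tscale (of_int (sign \<sigma>)) f}"

end

theory Submission
  imports Defs
begin

(* The Young symmetrizer of a tableau (the signed sum over column permutations composed with the
   sum over row permutations) acts on the word basis of the tensor power by place permutations,
   and these commute with relabelling the letters by S_n. Hence the sign-isotypic part of W is
   the image of the coefficient functions that are alternating under relabelling, and for such a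
   function the coefficient of its symmetrization at a word w vanishes as soon as w is fixed by a
   relabelling combined with place permutations that altogether act by the sign -1. For the
   two-column shape this happens if a column of w repeats a letter, if two letters do not occur in
   w, if two letters occur in both columns, if a two-cell row carries letters occurring nowhere
   else, or if at least two rows have two cells and exactly one letter is shared by the columns.
   Counting letters, some word avoids all of these only for the four listed shapes. For them every
   such word is, up to a column permutation, a relabelling of one fixed word, so the isotypic part
   is at most one-dimensional, and the antisymmetrized indicator of that word gives a nonzero
   element of it. *)

lemma permutes_lessThan_less: "p permutes {..<d} \<Longrightarrow> x < d \<Longrightarrow> p x < d"
  using permutes_in_image[of p "{..<d}" x] by simp

definition perms_preserving :: "nat \<Rightarrow> (nat \<Rightarrow> 'a) \<Rightarrow> (nat \<Rightarrow> nat) set" where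
  "perms_preserving d g = {p. p permutes {..<d} \<and> (\<forall>x<d. g (p x) = g x)}"

lemma perms_preserving_permutes: "p \<in> perms_preserving d g \<Longrightarrow> p permutes {..<d}"
  by (simp add: perms_preserving_def)

lemma perms_preserving_preserves: "p \<in> perms_preserving d g \<Longrightarrow> x < d \<Longrightarrow> g (p x) = g x"
  by (simp add: perms_preserving_def)

lemma perms_preserving_permutation: "p \<in> perms_preserving d g \<Longrightarrow> permutation p"
  by (meson perms_preserving_permutes finite_lessThan permutes_imp_permutation)

lemma finite_perms_preserving: "finite (perms_preserving d g)"
  by (rule finite_subset[OF _ finite_permutations[of "{..<d}"]])
    (auto simp: perms_preserving_def)

lemma id_in_perms_preserving: "id \<in> perms_preserving d g"
  by (simp add: perms_preserving_def)

lemma card_perms_preserving_pos: "0 < card (perms_preserving d g)"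
  using id_in_perms_preserving finite_perms_preserving card_gt_0_iff by blast

lemma comp_in_perms_preserving:
  "p \<in> perms_preserving d g \<Longrightarrow> q \<in> perms_preserving d g \<Longrightarrow> p \<circ> q \<in> perms_preserving d g"
  by (auto simp: perms_preserving_def permutes_compose permutes_lessThan_less)

lemma inv_in_perms_preserving:
  assumes "p \<in> perms_preserving d g"
  shows "inv p \<in> perms_preserving d g"
proof -
  have p: "p permutes {..<d}" using assms by (rule perms_preserving_permutes)
  have "g (inv p x) = g x" if "x < d" for x
    using perms_preserving_preserves[OF assms permutes_lessThan_less[OF permutes_inv[OF p] that]]
    by (simp add: permutes_inverses(1)[OF p])
  then show ?thesis using p by (simp add: perms_preserving_def permutes_inv)
qed

lemma transpose_in_perms_preserving:
  "a < d \<Longrightarrow> b < d \<Longrightarrow> g a = g b \<Longrightarrow> Transposition.transpose a b \<in> perms_preserving d g"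
  by (auto simp: perms_preserving_def permutes_swap_id transpose_def)

lemma perms_preserving_cong:
  "(\<And>x. x < d \<Longrightarrow> g x = h x) \<Longrightarrow> perms_preserving d g = perms_preserving d h"
  by (auto simp: perms_preserving_def permutes_lessThan_less)

lemma sum_perms_preserving_comp_left:
  assumes p: "p \<in> perms_preserving d g"
  shows "(\<Sum>c\<in>perms_preserving d g. h (p \<circ> c)) = (\<Sum>c\<in>perms_preserving d g. h c)"
proof (rule sum.reindex_bij_witness[where i = "\<lambda>c. inv p \<circ> c" and j = "\<lambda>c. p \<circ> c"])
  have "inv p \<circ> p = id" "p \<circ> inv p = id"
    using perms_preserving_permutes[OF p] by (simp_all add: permutes_inv_o)
  then show "inv p \<circ> (p \<circ> c) = c" "p \<circ> (inv p \<circ> c) = c" for c :: "nat \<Rightarrow> nat"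
    by (simp_all add: o_assoc)
qed (use p in \<open>simp_all add: comp_in_perms_preserving inv_in_perms_preserving\<close>)

lemma sum_perms_preserving_comp_right:
  assumes p: "p \<in> perms_preserving d g"
  shows "(\<Sum>c\<in>perms_preserving d g. h (c \<circ> p)) = (\<Sum>c\<in>perms_preserving d g. h c)"
proof (rule sum.reindex_bij_witness[where i = "\<lambda>c. c \<circ> inv p" and j = "\<lambda>c. c \<circ> p"])
  have "inv p \<circ> p = id" "p \<circ> inv p = id"
    using perms_preserving_permutes[OF p] by (simp_all add: permutes_inv_o)
  then show "c \<circ> p \<circ> inv p = c" "c \<circ> inv p \<circ> p = c" for c :: "nat \<Rightarrow> nat"
    by (simp_all add: o_assoc[symmetric])
qed (use p in \<open>simp_all add: comp_in_perms_preserving inv_in_perms_preserving\<close>)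

lemma sign_two_transpositions:
  "a \<noteq> b \<Longrightarrow> c \<noteq> e \<Longrightarrow> sign (Transposition.transpose a b \<circ> Transposition.transpose c e) = 1"
  by (simp add: sign_compose permutation_swap_id sign_swap_id)

lemma of_int_sign_mult_self: "(of_int (sign p) :: 'a::ring_1) * of_int (sign p) = 1"
  by (metis of_int_mult sign_idempotent of_int_1)

lemma ex_permutes_extend_inj:
  fixes u v :: "'a \<Rightarrow> nat"
  assumes "finite A" "inj_on u A" "inj_on v A" "u ` A \<subseteq> {..<n}" "v ` A \<subseteq> {..<n}"
  shows "\<exists>t. t permutes {..<n} \<and> (\<forall>j\<in>A. t (u j) = v j)"
proof -
  let ?X = "u ` A" and ?Y = "v ` A"
  define g where "g = v \<circ> inv_into A u"
  have g: "bij_betw g ?X ?Y"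
    unfolding g_def using assms(2,3)
    by (intro bij_betw_trans[OF bij_betw_inv_into] inj_on_imp_bij_betw)
  have "card ({..<n} - ?X) = card ({..<n} - ?Y)"
    using assms by (simp add: card_Diff_subset card_image)
  then obtain h where h: "bij_betw h ({..<n} - ?X) ({..<n} - ?Y)"
    using finite_same_card_bij[of "{..<n} - ?X" "{..<n} - ?Y"] by auto
  define t where "t x = (if x \<in> ?X then g x else if x < n then h x else x)" for x
  have "bij_betw t ?X ?Y" using g by (rule bij_betw_cong[THEN iffD1, rotated]) (simp add: t_def)
  moreover have "bij_betw t ({..<n} - ?X) ({..<n} - ?Y)"
    using h by (rule bij_betw_cong[THEN iffD1, rotated]) (simp add: t_def)
  ultimately have "bij_betw t (?X \<union> ({..<n} - ?X)) (?Y \<union> ({..<n} - ?Y))"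
    by (rule bij_betw_combine) blast
  then have "bij_betw t {..<n} {..<n}"
    using assms(4,5) by (simp add: sup.absorb2)
  then have "t permutes {..<n}"
    by (rule bij_imp_permutes) (use assms(4) in \<open>auto simp: t_def\<close>)
  moreover have "t (u j) = v j" if "j \<in> A" for j
    using that assms(2) by (simp add: t_def g_def)
  ultimately show ?thesis by blast
qed

section \<open>Words, place permutations and relabellings\<close>

lemma words_memI:
  "(\<And>i. i < d \<Longrightarrow> w i < n) \<Longrightarrow> (\<And>i. d \<le> i \<Longrightarrow> w i = undefined) \<Longrightarrow> w \<in> words n d"
  by (auto simp: words_def PiE_def extensional_def)

lemma words_less: "w \<in> words n d \<Longrightarrow> i < d \<Longrightarrow> w i < n"
  by (auto simp: words_def)

lemma words_eqI: "w \<in> words n d \<Longrightarrow> v \<in> words n d \<Longrightarrow> (\<And>i. i < d \<Longrightarrow> w i = v i) \<Longrightarrow> w = v"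
  unfolding words_def by (rule PiE_ext) auto

definition place_perm :: "nat \<Rightarrow> (nat \<Rightarrow> nat) \<Rightarrow> (nat \<Rightarrow> nat) \<Rightarrow> nat \<Rightarrow> nat" where
  "place_perm d w p = restrict (w \<circ> p) {..<d}"

definition relabel :: "nat \<Rightarrow> (nat \<Rightarrow> nat) \<Rightarrow> (nat \<Rightarrow> nat) \<Rightarrow> nat \<Rightarrow> nat" where
  "relabel d t w = restrict (t \<circ> w) {..<d}"

lemma place_perm_apply [simp]: "i < d \<Longrightarrow> place_perm d w p i = w (p i)"
  by (simp add: place_perm_def)

lemma relabel_apply [simp]: "i < d \<Longrightarrow> relabel d t w i = t (w i)"
  by (simp add: relabel_def)

lemma place_perm_in_words: "w \<in> words n d \<Longrightarrow> p permutes {..<d} \<Longrightarrow> place_perm d w p \<in> words n d"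
  by (rule words_memI) (auto simp: place_perm_def permutes_lessThan_less words_less)

lemma relabel_in_words: "w \<in> words n d \<Longrightarrow> t permutes {..<n} \<Longrightarrow> relabel d t w \<in> words n d"
  by (rule words_memI) (auto simp: relabel_def permutes_lessThan_less words_less)

lemma place_perm_place_perm:
  "q permutes {..<d} \<Longrightarrow> place_perm d (place_perm d w p) q = place_perm d w (p \<circ> q)"
  by (auto simp: place_perm_def fun_eq_iff permutes_lessThan_less)

lemma place_perm_relabel:
  "q permutes {..<d} \<Longrightarrow> place_perm d (relabel d t w) q = relabel d t (place_perm d w q)"
  by (auto simp: place_perm_def relabel_def fun_eq_iff permutes_lessThan_less)

lemma relabel_relabel: "relabel d t (relabel d s w) = relabel d (t \<circ> s) w"
  by (auto simp: relabel_def fun_eq_iff)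

lemma relabel_id: "w \<in> words n d \<Longrightarrow> relabel d id w = w"
  by (rule words_eqI[of _ n d]) (auto intro: relabel_in_words permutes_id)

definition unique_letter :: "nat \<Rightarrow> (nat \<Rightarrow> nat) \<Rightarrow> nat \<Rightarrow> bool" where
  "unique_letter d u j \<longleftrightarrow> (\<forall>i<d. u i = u j \<longrightarrow> i = j)"

lemma unique_letter_place_perm:
  assumes p: "p permutes {..<d}" and "j < d" "unique_letter d u (p j)"
  shows "unique_letter d (place_perm d u p) j"
  unfolding unique_letter_def
proof (intro allI impI)
  fix i assume i: "i < d" "place_perm d u p i = place_perm d u p j"
  then have "p i = p j"
    using assms permutes_lessThan_less[OF p] unfolding unique_letter_def by simp
  then show "i = j" using permutes_inj[OF p] by (simp add: inj_eq)
qed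

lemma unique_letter_if_not_shared:
  assumes "inj_on w S" "inj_on w T" "S \<union> T = {..<d}" "j < d" "w j \<notin> w ` S \<inter> w ` T"
  shows "unique_letter d w j"
  unfolding unique_letter_def
proof (intro allI impI)
  fix i assume i: "i < d" "w i = w j"
  have "i \<in> S \<union> T" "j \<in> S \<union> T" using i(1) assms(3,4) by auto
  moreover have "w j \<in> w ` S" if "i \<in> S \<or> j \<in> S" using that i(2) by (metis image_eqI)
  moreover have "w j \<in> w ` T" if "i \<in> T \<or> j \<in> T" using that i(2) by (metis image_eqI)
  ultimately have "i \<in> S \<and> j \<in> S \<or> i \<in> T \<and> j \<in> T" using assms(5) by blast
  then show "i = j" using assms(1,2) i(2) by (auto dest: inj_onD)
qed

section \<open>Alternating coefficient functions\<close>

definition alternating :: "nat \<Rightarrow> nat \<Rightarrow> ((nat \<Rightarrow> nat) \<Rightarrow> complex) \<Rightarrow> bool" where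
  "alternating n d f \<longleftrightarrow>
     (\<forall>v\<in>words n d. \<forall>t. t permutes {..<n} \<longrightarrow> f (relabel d t v) = of_int (sign t) * f v)"

lemma alternatingD:
  "alternating n d f \<Longrightarrow> v \<in> words n d \<Longrightarrow> t permutes {..<n} \<Longrightarrow>
     f (relabel d t v) = of_int (sign t) * f v"
  by (simp add: alternating_def)

lemma alternating_scale: "alternating n d f \<Longrightarrow> alternating n d (\<lambda>v. a * f v)"
  by (simp add: alternating_def algebra_simps)

lemma alternating_diff:
  "alternating n d f \<Longrightarrow> alternating n d g \<Longrightarrow> alternating n d (\<lambda>v. f v - a * g v)"
  by (simp add: alternating_def algebra_simps)

lemma alternating_place_transpose:
  assumes f: "alternating n d f" and v: "v \<in> words n d"
    and "p \<noteq> q" "p < d" "q < d" "unique_letter d v p" "unique_letter d v q"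
  shows "f (place_perm d v (Transposition.transpose p q)) = - f v"
proof -
  let ?t = "Transposition.transpose (v p) (v q)"
  have ne: "v p \<noteq> v q" using assms(3,5,6) unfolding unique_letter_def by metis
  have t: "?t permutes {..<n}"
    using words_less[OF v] assms(4,5) by (intro permutes_swap_id) auto
  have "relabel d ?t v = place_perm d v (Transposition.transpose p q)"
  proof (rule words_eqI[OF relabel_in_words[OF v t] place_perm_in_words[OF v]])
    show "Transposition.transpose p q permutes {..<d}"
      using assms(4,5) by (intro permutes_swap_id) auto
    fix i assume "i < d"
    with assms(3,6,7) show "relabel d ?t v i = place_perm d v (Transposition.transpose p q) i"
      unfolding unique_letter_def by (auto simp: transpose_def)
  qed
  then show ?thesis using alternatingD[OF f v t] ne by (simp add: sign_swap_id)
qed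

text \<open>A place permutation inside a set \<open>S\<close> on which \<open>w\<close> is injective is a relabelling of \<open>w\<close>;
  the last hypothesis makes it act trivially on the letters that \<open>w\<close> also uses outside \<open>S\<close>.\<close>

lemma place_perm_eq_relabel:
  assumes c: "c permutes S" and "S \<subseteq> {..<d}" and inj: "inj_on w S"
    and fixed: "\<And>j s. j < d \<Longrightarrow> j \<notin> S \<Longrightarrow> s \<in> S \<Longrightarrow> w j = w s \<Longrightarrow> c s = s"
  shows "place_perm d w c = relabel d (map_permutation S w c) w"
proof
  fix j
  show "place_perm d w c j = relabel d (map_permutation S w c) w j"
  proof (cases "j < d")
    case False then show ?thesis by (simp add: place_perm_def relabel_def)
  next
    case j: True
    show ?thesis
    proof (cases "j \<in> S")
      case True then show ?thesis using j by (simp add: map_permutation_apply[OF inj])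
    next
      case False
      have "map_permutation S w c (w j) = w j"
      proof (cases "w j \<in> w ` S")
        case True
        then obtain s where s: "s \<in> S" "w j = w s" by blast
        then show ?thesis using map_permutation_apply[OF inj s(1)] fixed[OF j False s] by simp
      next
        case False then show ?thesis by (simp add: map_permutation_def restrict_id_def)
      qed
      then show ?thesis using j False permutes_not_in[OF c False] by simp
    qed
  qed
qed

lemma alternating_place_perm:
  assumes f: "alternating n d f" and v: "v \<in> words n d" and c: "c permutes S"
    and S: "S \<subseteq> {..<d}" and inj: "inj_on v S"
    and "\<And>j s. j < d \<Longrightarrow> j \<notin> S \<Longrightarrow> s \<in> S \<Longrightarrow> v j = v s \<Longrightarrow> c s = s"
  shows "f (place_perm d v c) = of_int (sign c) * f v"
proof -
  let ?t = "map_permutation S v c"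
  have fin: "finite S" using S finite_subset by blast
  have "?t permutes v ` S"
    using inj c by (intro map_permutation_permutes) (auto simp: bij_betw_def)
  then have t: "?t permutes {..<n}"
    by (rule permutes_subset) (use S words_less[OF v] in auto)
  have "sign ?t = sign c" by (rule sign_map_permutation[OF inj c fin])
  then show ?thesis
    using alternatingD[OF f v t] place_perm_eq_relabel[OF c S inj] assms(6) by simp
qed

definition antisymmetrize :: "nat \<Rightarrow> nat \<Rightarrow> ((nat \<Rightarrow> nat) \<Rightarrow> complex) \<Rightarrow> (nat \<Rightarrow> nat) \<Rightarrow> complex" where
  "antisymmetrize n d g v =
     (\<Sum>\<sigma> | \<sigma> permutes {..<n}. of_int (sign \<sigma>) * g (relabel d (inv \<sigma>) v))"

lemma alternating_antisymmetrize: "alternating n d (antisymmetrize n d g)"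
  unfolding alternating_def
proof (intro ballI allI impI)
  fix v t assume t: "t permutes {..<n}"
  have "(\<Sum>\<sigma> | \<sigma> permutes {..<n}. of_int (sign \<sigma>) * g (relabel d (inv \<sigma>) (relabel d t v))) =
        (\<Sum>\<sigma> | \<sigma> permutes {..<n}.
           of_int (sign (t \<circ> \<sigma>)) * g (relabel d (inv (t \<circ> \<sigma>)) (relabel d t v)))"
    by (rule setum_permutations_compose_left[OF t])
  also have "\<dots> = (\<Sum>\<sigma> | \<sigma> permutes {..<n}.
      of_int (sign t) * (of_int (sign \<sigma>) * g (relabel d (inv \<sigma>) v)))"
  proof (intro sum.cong refl)
    fix \<sigma> assume "\<sigma> \<in> {\<sigma>. \<sigma> permutes {..<n}}"
    then have \<sigma>: "\<sigma> permutes {..<n}" by simp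
    have "inv (t \<circ> \<sigma>) \<circ> t = inv \<sigma>"
      using t \<sigma> by (simp add: o_inv_distrib permutes_bij comp_assoc permutes_inv_o(2))
    moreover have "sign (t \<circ> \<sigma>) = sign t * sign \<sigma>"
      using t \<sigma> by (simp add: sign_compose permutes_imp_permutation[OF finite_lessThan])
    ultimately show "of_int (sign (t \<circ> \<sigma>)) * g (relabel d (inv (t \<circ> \<sigma>)) (relabel d t v)) =
        of_int (sign t) * (of_int (sign \<sigma>) * g (relabel d (inv \<sigma>) v))"
      by (simp add: relabel_relabel)
  qed
  finally show "antisymmetrize n d g (relabel d t v) = of_int (sign t) * antisymmetrize n d g v"
    by (simp add: antisymmetrize_def sum_distrib_left)
qed

lemma relabel_fixing_word_eq_id:
  assumes w: "w \<in> words n d" and missing: "n \<le> card (w ` {..<d}) + 1"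
    and r: "r permutes {..<n}" and fixes_w: "relabel d r w = w"
  shows "r = id"
proof
  let ?X = "w ` {..<d}"
  have fixes_X: "r x = x" if x: "x \<in> ?X" for x
  proof -
    obtain j where "j < d" "x = w j" using x by blast
    then show ?thesis using fun_cong[OF fixes_w, of j] by simp
  qed
  have X: "?X \<subseteq> {..<n}" using words_less[OF w] by auto
  have "card ({..<n} - ?X) \<le> 1"
    using missing card_Diff_subset[OF finite_imageI[OF finite_lessThan] X] by simp
  then have at_most_one: "x = y" if "x \<in> {..<n} - ?X" "y \<in> {..<n} - ?X" for x y
    using that card_le_Suc0_iff_eq[of "{..<n} - ?X"] by simp
  fix y
  show "r y = id y"
  proof (cases "y \<in> {..<n} - ?X")
    case True
    have "r y \<notin> ?X"
    proof
      assume "r y \<in> ?X"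
      then have "r (r y) = r y" by (rule fixes_X)
      then have "r y = y" using permutes_inj[OF r] by (simp add: inj_eq)
      with \<open>r y \<in> ?X\<close> True show False by simp
    qed
    moreover have "r y < n" using True permutes_lessThan_less[OF r] by simp
    ultimately show ?thesis using at_most_one[OF _ True, of "r y"] by simp
  next
    case False
    then have "y \<in> ?X \<or> y \<notin> {..<n}" by blast
    then show ?thesis using fixes_X permutes_not_in[OF r] by auto
  qed
qed

lemma antisymmetrize_indicator_self:
  assumes w: "w \<in> words n d" and "n \<le> card (w ` {..<d}) + 1"
  shows "antisymmetrize n d (\<lambda>v. of_bool (v = w)) w = 1"
proof -
  have "of_bool (relabel d (inv \<sigma>) w = w) = (of_bool (\<sigma> = id) :: complex)"
    if \<sigma>: "\<sigma> permutes {..<n}" for \<sigma>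
    using relabel_fixing_word_eq_id[OF w assms(2) permutes_inv[OF \<sigma>]] relabel_id[OF w]
      permutes_inv_inv[OF \<sigma>] by (cases "\<sigma> = id") auto
  then have "antisymmetrize n d (\<lambda>v. of_bool (v = w)) w =
      (\<Sum>\<sigma> | \<sigma> permutes {..<n}. if \<sigma> = id then 1 else 0)"
    unfolding antisymmetrize_def by (intro sum.cong refl) auto
  also have "\<dots> = 1"
    using sum.delta[OF finite_permutations[OF finite_lessThan[of n]], of id "\<lambda>_. 1"]
    by simp
  finally show ?thesis .
qed

lemma antisymmetrize_indicator_eq_0:
  "(\<And>\<sigma>. \<sigma> permutes {..<n} \<Longrightarrow> relabel d \<sigma> v \<noteq> w) \<Longrightarrow>
     antisymmetrize n d (\<lambda>v. of_bool (v = w)) v = 0"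
  unfolding antisymmetrize_def by (rule sum.neutral) (auto simp: permutes_inv)

section \<open>The Young symmetrizer on words\<close>

definition row_sym ::
  "nat \<Rightarrow> (nat \<Rightarrow> 'a) \<Rightarrow> ((nat \<Rightarrow> nat) \<Rightarrow> complex) \<Rightarrow> (nat \<Rightarrow> nat) \<Rightarrow> complex" where
  "row_sym d row f u = (\<Sum>r\<in>perms_preserving d row. f (place_perm d u r))"

definition young_coeff ::
  "nat \<Rightarrow> (nat \<Rightarrow> 'a) \<Rightarrow> (nat \<Rightarrow> 'b) \<Rightarrow> ((nat \<Rightarrow> nat) \<Rightarrow> complex) \<Rightarrow> (nat \<Rightarrow> nat) \<Rightarrow> complex" where
  "young_coeff d col row f w =
     (\<Sum>c\<in>perms_preserving d col. of_int (sign c) * row_sym d row f (place_perm d w c))"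

lemma young_coeff_double_sum:
  "young_coeff d col row f w = (\<Sum>c\<in>perms_preserving d col. \<Sum>r\<in>perms_preserving d row.
     of_int (sign c) * f (place_perm d (place_perm d w c) r))"
  by (simp add: young_coeff_def row_sym_def sum_distrib_left)

lemma young_sym_eq_young_coeff:
  "young_sym lam n f w = (if w \<in> words n (sum_list lam)
     then young_coeff (sum_list lam) (col_of lam) (row_of lam) f w else 0)"
proof (cases "w \<in> words n (sum_list lam)")
  case True
  have "col_group lam = perms_preserving (sum_list lam) (col_of lam)"
    "row_group lam = perms_preserving (sum_list lam) (row_of lam)"
    by (simp_all add: col_group_def row_group_def perms_preserving_def)
  then show ?thesis
    unfolding young_sym_def young_coeff_double_sum using True
    by (simp add: pos_act_def place_perm_def[symmetric] place_perm_in_words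
        perms_preserving_permutes
        cong: sum.cong)
next
  case False
  then show ?thesis by (simp add: young_sym_def pos_act_def)
qed

lemma young_coeff_shape_cong:
  assumes "\<And>x. x < d \<Longrightarrow> col x = col' x" "\<And>x. x < d \<Longrightarrow> row x = row' x"
  shows "young_coeff d col row = young_coeff d col' row'"
proof -
  have "perms_preserving d col = perms_preserving d col'"
    using assms(1) by (rule perms_preserving_cong)
  moreover have "perms_preserving d row = perms_preserving d row'"
    using assms(2) by (rule perms_preserving_cong)
  ultimately show ?thesis by (simp add: young_coeff_def row_sym_def fun_eq_iff)
qed

lemma young_coeff_cong:
  assumes "w \<in> words n d" "\<And>v. v \<in> words n d \<Longrightarrow> f v = g v"
  shows "young_coeff d col row f w = young_coeff d col row g w"
  unfolding young_coeff_double_sum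
  by (intro sum.cong refl) (simp add: assms place_perm_in_words perms_preserving_permutes)

lemma young_coeff_scale: "young_coeff d col row (\<lambda>v. a * f v) w = a * young_coeff d col row f w"
  unfolding young_coeff_double_sum by (simp add: sum_distrib_left mult_ac)

lemma young_coeff_diff:
  "young_coeff d col row (\<lambda>v. f v - a * g v) w =
     young_coeff d col row f w - a * young_coeff d col row g w"
  unfolding young_coeff_double_sum by (simp add: algebra_simps sum_subtractf sum_distrib_left)

lemma young_coeff_relabel:
  assumes f: "alternating n d f" and w: "w \<in> words n d" and t: "t permutes {..<n}"
  shows "young_coeff d col row f (relabel d t w) = of_int (sign t) * young_coeff d col row f w"
proof -
  have "young_coeff d col row f (relabel d t w) =
      (\<Sum>c\<in>perms_preserving d col. \<Sum>r\<in>perms_preserving d row.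
         of_int (sign t) * (of_int (sign c) * f (place_perm d (place_perm d w c) r)))"
    unfolding young_coeff_double_sum
    by (intro sum.cong refl) (simp add: alternatingD[OF f _ t] place_perm_relabel
        place_perm_in_words[OF place_perm_in_words[OF w]] perms_preserving_permutes)
  then show ?thesis by (simp add: young_coeff_double_sum sum_distrib_left)
qed

lemma young_coeff_place_perm:
  assumes c0: "c0 \<in> perms_preserving d col"
  shows "young_coeff d col row f (place_perm d w c0) = of_int (sign c0) * young_coeff d col row f w"
proof -
  let ?C = "perms_preserving d col"
  define h where "h c = of_int (sign (inv c0 \<circ> c)) * row_sym d row f (place_perm d w c)" for c
  have inv_c0: "inv c0 \<circ> c0 = id" using perms_preserving_permutes[OF c0] by (rule permutes_inv_o)
  have "young_coeff d col row f (place_perm d w c0) = (\<Sum>c\<in>?C. h (c0 \<circ> c))"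
    unfolding young_coeff_def h_def
    by (intro sum.cong refl)
      (simp add: place_perm_place_perm perms_preserving_permutes o_assoc inv_c0)
  also have "\<dots> = (\<Sum>c\<in>?C. h c)" by (rule sum_perms_preserving_comp_left[OF c0])
  also have "\<dots> = of_int (sign c0) * young_coeff d col row f w"
  proof -
    have "sign (inv c0 \<circ> c) = sign c0 * sign c" if "c \<in> ?C" for c
      using sign_compose[OF perms_preserving_permutation[OF inv_in_perms_preserving[OF c0]]
          perms_preserving_permutation[OF that]]
        sign_inverse[OF perms_preserving_permutation[OF c0]]
      by simp
    then show ?thesis
      unfolding young_coeff_def h_def sum_distrib_left by (intro sum.cong refl) simp
  qed
  finally show ?thesis .
qed

lemma young_coeff_antisymmetrize:
  "young_coeff d col row (antisymmetrize n d g) w = (\<Sum>\<sigma> | \<sigma> permutes {..<n}.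
     of_int (sign \<sigma>) * young_coeff d col row g (relabel d (inv \<sigma>) w))"
proof -
  let ?C = "perms_preserving d col" and ?R = "perms_preserving d row"
  have "young_coeff d col row g (relabel d (inv \<sigma>) w) = (\<Sum>c\<in>?C. \<Sum>r\<in>?R.
      of_int (sign c) * g (relabel d (inv \<sigma>) (place_perm d (place_perm d w c) r)))" for \<sigma>
    unfolding young_coeff_double_sum
    by (intro sum.cong refl) (simp add: place_perm_relabel perms_preserving_permutes)
  then show ?thesis
    unfolding young_coeff_double_sum antisymmetrize_def
    by (simp add: sum_distrib_left sum.swap[of _ "{\<sigma>. \<sigma> permutes {..<n}}"] mult_ac)
qed

lemma young_coeff_eq_0_if_column_repeat:
  assumes w: "w \<in> words n d" and "p \<noteq> q" "p < d" "q < d" "col p = col q" "w p = w q"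
  shows "young_coeff d col row f w = 0"
proof -
  let ?t = "Transposition.transpose p q"
  have t: "?t \<in> perms_preserving d col" using assms(3-5) by (rule transpose_in_perms_preserving)
  have "place_perm d w ?t = w"
    by (rule words_eqI[OF place_perm_in_words[OF w perms_preserving_permutes[OF t]] w])
      (use assms(6) in \<open>auto simp: transpose_def\<close>)
  then have "young_coeff d col row f w = - young_coeff d col row f w"
    using young_coeff_place_perm[OF t, of row f w] assms(2) by (simp add: sign_swap_id)
  then show ?thesis by simp
qed

lemma young_coeff_eq_0_if_two_letters_unused:
  assumes f: "alternating n d f" and w: "w \<in> words n d"
    and "a \<noteq> b" "a < n" "b < n" "a \<notin> w ` {..<d}" "b \<notin> w ` {..<d}"
  shows "young_coeff d col row f w = 0"
proof -
  let ?t = "Transposition.transpose a b"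
  have t: "?t permutes {..<n}" using assms(4,5) by (intro permutes_swap_id) auto
  have "relabel d ?t w = w"
    by (rule words_eqI[OF relabel_in_words[OF w t] w])
      (use assms(6,7) in \<open>auto simp: transpose_def\<close>)
  then have "young_coeff d col row f w = - young_coeff d col row f w"
    using young_coeff_relabel[OF f w t, where col = col and row = row] assms(3)
    by (simp add: sign_swap_id)
  then show ?thesis by simp
qed

text \<open>Exchanging the letters \<open>a\<close> and \<open>b\<close> is a relabelling of sign \<open>-1\<close>, but it is also
  the place permutation \<open>(P P') (Q Q')\<close>, a column permutation of sign \<open>+1\<close>.\<close>

lemma young_coeff_eq_0_if_two_letters_shared:
  assumes f: "alternating n d f" and w: "w \<in> words n d"
    and a: "{j. j < d \<and> w j = a} = {P, Q}" and b: "{j. j < d \<and> w j = b} = {P', Q'}"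
    and "a \<noteq> b" and col: "col P = col P'" "col Q = col Q'" "col P \<noteq> col Q"
  shows "young_coeff d col row f w = 0"
proof -
  have lt: "P < d" "Q < d" "P' < d" "Q' < d" and letters: "w P = a" "w Q = a" "w P' = b" "w Q' = b"
    using a b by blast+
  have occ_a: "j = P \<or> j = Q" if "j < d" "w j = a" for j using a that by blast
  have occ_b: "j = P' \<or> j = Q'" if "j < d" "w j = b" for j using b that by blast
  have distinct: "P \<noteq> P'" "Q \<noteq> Q'" "P \<noteq> Q'" "Q \<noteq> P'" "P \<noteq> Q" "P' \<noteq> Q'"
    using letters \<open>a \<noteq> b\<close> col by auto
  let ?t = "Transposition.transpose a b"
  let ?c = "Transposition.transpose P P' \<circ> Transposition.transpose Q Q'"
  have t: "?t permutes {..<n}" using words_less[OF w] lt letters by (intro permutes_swap_id) auto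
  have c: "?c \<in> perms_preserving d col"
    using lt col by (intro comp_in_perms_preserving transpose_in_perms_preserving) auto
  have "relabel d ?t w = place_perm d w ?c"
  proof (rule words_eqI[OF relabel_in_words[OF w t]
        place_perm_in_words[OF w perms_preserving_permutes[OF c]]])
    fix i assume i: "i < d"
    show "relabel d ?t w i = place_perm d w ?c i"
      using occ_a[OF i] occ_b[OF i] letters distinct i by (auto simp: transpose_def)
  qed
  then have "young_coeff d col row f (relabel d ?t w) = young_coeff d col row f (place_perm d w ?c)"
    by simp
  then have "- young_coeff d col row f w = young_coeff d col row f w"
    by (simp add: young_coeff_relabel[OF f w t] young_coeff_place_perm[OF c] sign_swap_id
        sign_two_transpositions distinct \<open>a \<noteq> b\<close>)
  then show ?thesis by simp
qed

lemma row_sym_eq_0_if_unique_row: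
  assumes f: "alternating n d f" and u: "u \<in> words n d"
    and "p \<noteq> q" "p < d" "q < d" "row p = row q"
    and unique: "\<And>x. x < d \<Longrightarrow> row x = row p \<Longrightarrow> unique_letter d u x"
  shows "row_sym d row f u = 0"
proof -
  let ?R = "perms_preserving d row" and ?s = "Transposition.transpose p q"
  have s: "?s \<in> ?R" using assms(4-6) by (rule transpose_in_perms_preserving)
  have swap: "f (place_perm d u (r \<circ> ?s)) = - f (place_perm d u r)" if r: "r \<in> ?R" for r
  proof -
    have rp: "r permutes {..<d}" using r by (rule perms_preserving_permutes)
    have "unique_letter d u (r x)" if "x < d" "row x = row p" for x
      using unique permutes_lessThan_less[OF rp that(1)] perms_preserving_preserves[OF r that(1)]
        that(2)
      by simp
    then have "unique_letter d (place_perm d u r) p" "unique_letter d (place_perm d u r) q"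
      using assms(4-6) by (auto intro: unique_letter_place_perm[OF rp])
    then have "f (place_perm d (place_perm d u r) ?s) = - f (place_perm d u r)"
      using assms(3-5) by (intro alternating_place_transpose[OF f place_perm_in_words[OF u rp]])
    then show ?thesis using assms(4,5) by (simp add: place_perm_place_perm permutes_swap_id)
  qed
  have "row_sym d row f u = (\<Sum>r\<in>?R. f (place_perm d u (r \<circ> ?s)))"
    unfolding row_sym_def by (rule sum_perms_preserving_comp_right[OF s, symmetric])
  also have "\<dots> = - row_sym d row f u"
    unfolding row_sym_def sum_negf[symmetric] using swap by (rule sum.cong[OF refl])
  finally show ?thesis by simp
qed

lemma young_coeff_eq_0_if_inj:
  assumes f: "alternating n d f" and w: "w \<in> words n d" and inj: "inj_on w {..<d}"
    and "p \<noteq> q" "p < d" "q < d" "row p = row q"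
  shows "young_coeff d col row f w = 0"
proof -
  have "row_sym d row f (place_perm d w c) = 0" if c: "c \<in> perms_preserving d col" for c
  proof (rule row_sym_eq_0_if_unique_row[OF f _ assms(4-7)])
    have cp: "c permutes {..<d}" using c by (rule perms_preserving_permutes)
    show "place_perm d w c \<in> words n d" using w cp by (rule place_perm_in_words)
    show "unique_letter d (place_perm d w c) x" if "x < d" "row x = row p" for x
      using inj permutes_lessThan_less[OF cp that(1)]
      by (intro unique_letter_place_perm[OF cp that(1)]) (auto simp: unique_letter_def inj_on_def)
  qed
  then show ?thesis by (simp add: young_coeff_def)
qed

section \<open>The sign-isotypic subspace\<close>

definition sign_isotypic :: "nat list \<Rightarrow> nat \<Rightarrow> ((nat \<Rightarrow> nat) \<Rightarrow> complex) set" where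
  "sign_isotypic lam n = {F \<in> weyl_module lam n. \<forall>\<sigma>. \<sigma> permutes {..<n} \<longrightarrow>
     perm_act n (sum_list lam) \<sigma> F = tscale (of_int (sign \<sigma>)) F}"

lemma sign_multiplicity_eq_dim:
  "sign_multiplicity lam n = vector_space.dim tscale (sign_isotypic lam n)"
  by (simp add: sign_multiplicity_def sign_isotypic_def)

lemma young_sym_in_sign_isotypic:
  assumes f: "alternating n (sum_list lam) f"
  shows "young_sym lam n f \<in> sign_isotypic lam n"
proof -
  let ?d = "sum_list lam" and ?Y = "young_coeff (sum_list lam) (col_of lam) (row_of lam)"
  define f0 where "f0 v = (if v \<in> words n ?d then f v else 0)" for v
  have "young_sym lam n f = young_sym lam n f0"
    by (auto simp: fun_eq_iff young_sym_eq_young_coeff f0_def intro: young_coeff_cong)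
  moreover have "f0 \<in> tensors n ?d" by (simp add: tensors_def f0_def)
  ultimately have "young_sym lam n f \<in> weyl_module lam n" by (simp add: weyl_module_def)
  moreover have "perm_act n ?d \<sigma> (young_sym lam n f) = tscale (of_int (sign \<sigma>)) (young_sym lam n f)"
    if \<sigma>: "\<sigma> permutes {..<n}" for \<sigma>
  proof
    fix u
    have "?Y f (relabel ?d (inv \<sigma>) u) = of_int (sign \<sigma>) * ?Y f u" if "u \<in> words n ?d"
      using young_coeff_relabel[OF f that permutes_inv[OF \<sigma>]]
        sign_inverse[OF permutes_imp_permutation[OF finite_lessThan \<sigma>]] by simp
    then show "perm_act n ?d \<sigma> (young_sym lam n f) u =
        tscale (of_int (sign \<sigma>)) (young_sym lam n f) u"
      using relabel_in_words[OF _ permutes_inv[OF \<sigma>]]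
      by (simp add: perm_act_def tscale_def young_sym_eq_young_coeff relabel_def[symmetric])
  qed
  ultimately show ?thesis by (simp add: sign_isotypic_def)
qed

text \<open>Conversely, antisymmetrizing a preimage under the Young symmetrizer of a sign-isotypic
  vector \<open>F\<close> multiplies \<open>F\<close> by \<open>n!\<close>, since the symmetrizer commutes with relabelling.\<close>

lemma sign_isotypic_imp_young_sym:
  assumes F: "F \<in> sign_isotypic lam n"
  shows "\<exists>f. alternating n (sum_list lam) f \<and> F = young_sym lam n f"
proof -
  let ?d = "sum_list lam" and ?Y = "young_coeff (sum_list lam) (col_of lam) (row_of lam)"
  obtain g where g: "F = young_sym lam n g"
    using F by (auto simp: sign_isotypic_def weyl_module_def)
  have F_relabel: "F (relabel ?d (inv \<sigma>) w) = of_int (sign \<sigma>) * F w"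
    if "\<sigma> permutes {..<n}" "w \<in> words n ?d" for \<sigma> w
  proof -
    have "perm_act n ?d \<sigma> F w = tscale (of_int (sign \<sigma>)) F w"
      using F that(1) by (simp add: sign_isotypic_def)
    then show ?thesis using that(2) by (simp add: perm_act_def tscale_def relabel_def)
  qed
  define f where "f = (\<lambda>v. inverse (fact n) * antisymmetrize n ?d g v)"
  have "F w = young_sym lam n f w" for w
  proof (cases "w \<in> words n ?d")
    case True
    have "?Y (antisymmetrize n ?d g) w =
        (\<Sum>\<sigma> | \<sigma> permutes {..<n}. of_int (sign \<sigma>) * F (relabel ?d (inv \<sigma>) w))"
      unfolding young_coeff_antisymmetrize using relabel_in_words[OF True permutes_inv]
      by (intro sum.cong refl) (simp add: g young_sym_eq_young_coeff)
    also have "\<dots> = (\<Sum>\<sigma> | \<sigma> permutes {..<n}. F w)"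
      using F_relabel True
      by (intro sum.cong refl) (simp add: of_int_sign_mult_self mult.assoc[symmetric])
    also have "\<dots> = fact n * F w" by (simp add: card_permutations)
    finally show ?thesis
      using True by (simp add: young_sym_eq_young_coeff f_def young_coeff_scale)
  next
    case False
    then show ?thesis by (simp add: g young_sym_eq_young_coeff)
  qed
  moreover have "alternating n ?d f"
    unfolding f_def by (rule alternating_scale[OF alternating_antisymmetrize])
  ultimately show ?thesis by blast
qed

lemma sign_isotypic_eq:
  "sign_isotypic lam n = young_sym lam n ` {f. alternating n (sum_list lam) f}"
  using young_sym_in_sign_isotypic sign_isotypic_imp_young_sym by blast

lemma vector_space_tscale: "vector_space tscale"
  unfolding vector_space_def tscale_def by (auto simp: fun_eq_iff algebra_simps)

lemma dim_tscale_eq_0: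
  assumes "S \<subseteq> {0}"
  shows "vector_space.dim tscale S = 0"
proof (rule vector_space.dim_unique[OF vector_space_tscale, of "{}"])
  show "S \<subseteq> module.span tscale {}"
    using assms module.span_empty[OF vector_space_tscale[folded module_iff_vector_space]] by simp
  show "\<not> module.dependent tscale {}"
    using vector_space_tscale by (metis module.independent_empty module_iff_vector_space)
qed auto

lemma dim_tscale_eq_1:
  assumes "F1 \<in> S" "F1 \<noteq> 0" "\<And>F. F \<in> S \<Longrightarrow> \<exists>a. F = tscale a F1"
  shows "vector_space.dim tscale S = 1"
proof (rule vector_space.dim_unique[OF vector_space_tscale, of "{F1}"])
  have M: "module tscale" using vector_space_tscale by (simp add: module_iff_vector_space)
  show "S \<subseteq> module.span tscale {F1}"
  proof
    fix F assume "F \<in> S"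
    then obtain a where "F = tscale a F1" using assms(3) by blast
    then show "F \<in> module.span tscale {F1}"
      using module.span_scale[OF M module.span_base[OF M, of F1 "{F1}"]] by simp
  qed
  show "\<not> module.dependent tscale {F1}"
    using vector_space.dependent_single[OF vector_space_tscale] assms(2) by simp
qed (use assms in auto)

lemma sign_multiplicity_eq_0:
  assumes "\<And>f w. alternating n (sum_list lam) f \<Longrightarrow> w \<in> words n (sum_list lam) \<Longrightarrow>
      young_coeff (sum_list lam) (col_of lam) (row_of lam) f w = 0"
  shows "sign_multiplicity lam n = 0"
proof -
  have "young_sym lam n f = 0" if "alternating n (sum_list lam) f" for f
    using assms[OF that] by (simp add: fun_eq_iff young_sym_eq_young_coeff)
  then have "sign_isotypic lam n \<subseteq> {0}" by (auto simp: sign_isotypic_eq)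
  then show ?thesis unfolding sign_multiplicity_eq_dim by (rule dim_tscale_eq_0)
qed

lemma sign_multiplicity_eq_1:
  assumes w0: "w0 \<in> words n (sum_list lam)" and f1: "alternating n (sum_list lam) f1"
    and nonzero: "young_coeff (sum_list lam) (col_of lam) (row_of lam) f1 w0 \<noteq> 0"
    and determined: "\<And>f w. alternating n (sum_list lam) f \<Longrightarrow>
      young_coeff (sum_list lam) (col_of lam) (row_of lam) f w0 = 0 \<Longrightarrow>
      w \<in> words n (sum_list lam) \<Longrightarrow> young_coeff (sum_list lam) (col_of lam) (row_of lam) f w = 0"
  shows "sign_multiplicity lam n = 1"
proof -
  let ?Y = "young_coeff (sum_list lam) (col_of lam) (row_of lam)"
  have "young_sym lam n f1 w0 \<noteq> 0" using nonzero w0 by (simp add: young_sym_eq_young_coeff)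
  then have "young_sym lam n f1 \<noteq> 0" by auto
  moreover have "\<exists>a. young_sym lam n f = tscale a (young_sym lam n f1)"
    if f: "alternating n (sum_list lam) f" for f
  proof -
    define a where "a = ?Y f w0 / ?Y f1 w0"
    have "?Y (\<lambda>v. f v - a * f1 v) w0 = 0" using nonzero by (simp only: young_coeff_diff a_def) simp
    then have "?Y (\<lambda>v. f v - a * f1 v) w = 0" if "w \<in> words n (sum_list lam)" for w
      using determined[OF alternating_diff[OF f f1] _ that] by blast
    then have "young_sym lam n f = tscale a (young_sym lam n f1)"
      by (simp add: fun_eq_iff tscale_def young_sym_eq_young_coeff young_coeff_diff)
    then show ?thesis by blast
  qed
  ultimately show ?thesis
    unfolding sign_multiplicity_eq_dim sign_isotypic_eq
    by (intro dim_tscale_eq_1[of "young_sym lam n f1"]) (use f1 in auto)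
qed

section \<open>Two-column shapes\<close>

definition two_col_row :: "nat \<Rightarrow> nat \<Rightarrow> nat" where
  "two_col_row l p = (if p < 2 * l then p div 2 else p - l)"

definition two_col_col :: "nat \<Rightarrow> nat \<Rightarrow> nat" where
  "two_col_col l p = (if p < 2 * l then p mod 2 else 0)"

abbreviation two_col_coeff ::
  "nat \<Rightarrow> nat \<Rightarrow> ((nat \<Rightarrow> nat) \<Rightarrow> complex) \<Rightarrow> (nat \<Rightarrow> nat) \<Rightarrow> complex" where
  "two_col_coeff k l \<equiv> young_coeff (k + l) (two_col_col l) (two_col_row l)"

lemma conj_part_two_col:
  assumes "l \<le> k"
  shows "conj_part [k, l] = map (\<lambda>j. if j < l then 2 else 1) [0..<k]"
proof -
  have "Max (insert 0 (set [k, l])) = k" using assms by (auto simp: max_def)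
  then show ?thesis unfolding conj_part_def by (intro map_cong) auto
qed

lemma sum_take_conj_part_two_col:
  assumes "l \<le> k" "i < k"
  shows "sum_list (take (Suc i) (conj_part [k, l])) = (if i < l then 2 * i + 2 else l + i + 1)"
proof -
  have "sum_list (map (\<lambda>j::nat. if j < l then 2 else 1::nat) [0..<Suc i]) =
      (if i < l then 2 * i + 2 else l + i + 1)" for i
    by (induction i) auto
  then show ?thesis using assms by (simp add: conj_part_two_col take_map)
qed

lemma sum_list_conj_part_two_col:
  assumes "l \<le> k"
  shows "sum_list (conj_part [k, l]) = k + l"
proof (cases k)
  case 0 then show ?thesis using assms by (simp add: conj_part_two_col)
next
  case (Suc i)
  then have "conj_part [k, l] = take (Suc i) (conj_part [k, l])"
    using assms by (simp add: conj_part_two_col)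
  then show ?thesis using sum_take_conj_part_two_col[OF assms, of i] Suc assms by auto
qed

lemma row_of_conj_part_two_col:
  assumes "l \<le> k" "p < k + l"
  shows "row_of (conj_part [k, l]) p = two_col_row l p"
proof -
  have "{i. i < length (conj_part [k, l]) \<and> sum_list (take (Suc i) (conj_part [k, l])) \<le> p}
      = {i. i < k \<and> (if i < l then 2 * i + 2 else l + i + 1) \<le> p}"
    using assms sum_take_conj_part_two_col[OF assms(1)] by (auto simp: conj_part_two_col)
  also have "\<dots> = {..<two_col_row l p}"
    using assms unfolding two_col_row_def by (auto split: if_splits; presburger)
  finally show ?thesis unfolding row_of_def by simp
qed

lemma col_of_conj_part_two_col:
  assumes "l \<le> k" "p < k + l"
  shows "col_of (conj_part [k, l]) p = two_col_col l p"
proof -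
  have "sum_list (take (two_col_row l p) (conj_part [k, l])) =
      (if p < 2 * l then 2 * (p div 2) else p)"
  proof (cases "two_col_row l p")
    case 0
    then show ?thesis using assms unfolding two_col_row_def by (auto split: if_splits)
  next
    case (Suc i)
    then have "i < k" using assms unfolding two_col_row_def by (auto split: if_splits)
    then show ?thesis using sum_take_conj_part_two_col[OF assms(1)] Suc assms
      unfolding two_col_row_def by (auto split: if_splits)
  qed
  then show ?thesis unfolding col_of_def row_of_conj_part_two_col[OF assms] two_col_col_def
    by (auto simp: minus_mod_eq_mult_div[symmetric])
qed

lemma young_coeff_conj_part_two_col:
  assumes "l \<le> k"
  shows "young_coeff (k + l) (col_of (conj_part [k, l])) (row_of (conj_part [k, l])) =
    two_col_coeff k l"
  by (rule young_coeff_shape_cong)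
    (simp_all add: assms col_of_conj_part_two_col row_of_conj_part_two_col)

lemma sign_multiplicity_two_col_eq_0:
  assumes "l \<le> k"
    and "\<And>f w. alternating n (k + l) f \<Longrightarrow> w \<in> words n (k + l) \<Longrightarrow> two_col_coeff k l f w = 0"
  shows "sign_multiplicity (conj_part [k, l]) n = 0"
  by (rule sign_multiplicity_eq_0)
    (simp add: assms sum_list_conj_part_two_col young_coeff_conj_part_two_col)

lemma sign_multiplicity_two_col_eq_1:
  assumes lk: "l \<le> k" and "w0 \<in> words n (k + l)" "alternating n (k + l) f1"
    and "two_col_coeff k l f1 w0 \<noteq> 0"
    and "\<And>f w. alternating n (k + l) f \<Longrightarrow> two_col_coeff k l f w0 = 0 \<Longrightarrow> w \<in> words n (k + l) \<Longrightarrow>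
      two_col_coeff k l f w = 0"
  shows "sign_multiplicity (conj_part [k, l]) n = 1"
  using assms(2-5) unfolding young_coeff_conj_part_two_col[OF lk, symmetric]
  unfolding sum_list_conj_part_two_col[OF lk, symmetric]
  by (rule sign_multiplicity_eq_1)

definition left_col :: "nat \<Rightarrow> nat \<Rightarrow> nat set" where
  "left_col k l = {p. p < k + l \<and> two_col_col l p = 0}"

definition right_col :: "nat \<Rightarrow> nat \<Rightarrow> nat set" where
  "right_col k l = {p. p < k + l \<and> two_col_col l p = 1}"

lemma left_col_Un_right_col: "left_col k l \<union> right_col k l = {..<k + l}"
  by (auto simp: left_col_def right_col_def two_col_col_def)

lemma left_col_Int_right_col: "left_col k l \<inter> right_col k l = {}"
  by (auto simp: left_col_def right_col_def)

lemma card_right_col: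
  assumes "l \<le> k"
  shows "card (right_col k l) = l"
proof -
  have "right_col k l = (\<lambda>i. 2 * i + 1) ` {..<l}"
  proof (intro set_eqI iffI)
    fix p assume "p \<in> right_col k l"
    then have "p < 2 * l" "p mod 2 = 1"
      by (auto simp: right_col_def two_col_col_def split: if_splits)
    then have "p = 2 * (p div 2) + 1" "p div 2 < l" by presburger+
    then show "p \<in> (\<lambda>i. 2 * i + 1) ` {..<l}" by blast
  qed (use assms in \<open>auto simp: right_col_def two_col_col_def\<close>)
  then show ?thesis by (simp add: card_image inj_on_def)
qed

lemma card_left_col:
  assumes "l \<le> k"
  shows "card (left_col k l) = k"
proof -
  have "card (left_col k l) + card (right_col k l) = k + l"
    using card_Un_disjoint[of "left_col k l" "right_col k l"] left_col_Un_right_col[of k l]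
      left_col_Int_right_col[of k l] by (simp add: left_col_def right_col_def)
  then show ?thesis using card_right_col[OF assms] by simp
qed

lemma row_sym_two_col_eq_0:
  assumes f: "alternating n (k + l) f" and u: "u \<in> words n (k + l)" and "m < l" "l \<le> k"
    and "unique_letter (k + l) u (2 * m)" "unique_letter (k + l) u (2 * m + 1)"
  shows "row_sym (k + l) (two_col_row l) f u = 0"
proof (rule row_sym_eq_0_if_unique_row[OF f u, of "2 * m" "2 * m + 1"])
  show "unique_letter (k + l) u x" if "x < k + l" "two_col_row l x = two_col_row l (2 * m)" for x
  proof -
    have "x = 2 * m \<or> x = 2 * m + 1"
      using that assms(3) by (auto simp: two_col_row_def split: if_splits)
    then show ?thesis using assms(5,6) by auto
  qed
qed (use assms(3,4) in \<open>auto simp: two_col_row_def\<close>)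

definition single_repeat :: "nat \<Rightarrow> (nat \<Rightarrow> nat) \<Rightarrow> nat \<Rightarrow> nat \<Rightarrow> bool" where
  "single_repeat d u P Q \<longleftrightarrow> u P = u Q \<and> (\<forall>j<d. j \<noteq> P \<and> j \<noteq> Q \<longrightarrow> unique_letter d u j)"

lemma single_repeat_place_perm:
  assumes p: "p permutes {..<d}" and "P < d" "Q < d" "single_repeat d u P Q"
  shows "single_repeat d (place_perm d u p) (inv p P) (inv p Q)"
  unfolding single_repeat_def
proof (intro conjI allI impI)
  have lt: "inv p P < d" "inv p Q < d"
    using assms(2,3) by (auto intro: permutes_lessThan_less[OF permutes_inv[OF p]])
  have "p (inv p P) = P" "p (inv p Q) = Q" using p by (auto simp: permutes_inverses(1))
  then show "place_perm d u p (inv p P) = place_perm d u p (inv p Q)"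
    using lt assms(4) by (simp add: single_repeat_def)
  fix j assume j: "j < d" "j \<noteq> inv p P \<and> j \<noteq> inv p Q"
  then have "p j \<noteq> P" "p j \<noteq> Q" using p by (metis permutes_inverses(2))+
  then have "unique_letter d u (p j)"
    using assms(4) permutes_lessThan_less[OF p j(1)] by (simp add: single_repeat_def)
  then show "unique_letter d (place_perm d u p) j" by (rule unique_letter_place_perm[OF p j(1)])
qed

definition swap_first_rows :: "nat \<Rightarrow> nat" where
  "swap_first_rows = Transposition.transpose 0 2 \<circ> Transposition.transpose 1 3"

definition flip_first_rows :: "nat \<Rightarrow> nat" where
  "flip_first_rows = Transposition.transpose 0 1 \<circ> Transposition.transpose 2 3"

lemma swap_first_rows_apply:
  "swap_first_rows i =
    (if i = 0 then 2 else if i = 1 then 3 else if i = 2 then 0 else if i = 3 then 1 else i)"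
  by (simp add: swap_first_rows_def transpose_def)

lemma flip_first_rows_apply:
  "flip_first_rows i =
    (if i = 0 then 1 else if i = 1 then 0 else if i = 2 then 3 else if i = 3 then 2 else i)"
  by (simp add: flip_first_rows_def transpose_def)

lemma swap_first_rows_in_col_perms:
  "2 \<le> l \<Longrightarrow> l \<le> k \<Longrightarrow> swap_first_rows \<in> perms_preserving (k + l) (two_col_col l)"
  unfolding swap_first_rows_def
  by (intro comp_in_perms_preserving transpose_in_perms_preserving) (auto simp: two_col_col_def)

lemma flip_first_rows_in_row_perms:
  "2 \<le> l \<Longrightarrow> l \<le> k \<Longrightarrow> flip_first_rows \<in> perms_preserving (k + l) (two_col_row l)"
  unfolding flip_first_rows_def
  by (intro comp_in_perms_preserving transpose_in_perms_preserving) (auto simp: two_col_row_def)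

lemma sign_swap_first_rows: "sign swap_first_rows = 1"
  unfolding swap_first_rows_def by (rule sign_two_transpositions) auto

text \<open>When the repeated letter sits in the first two rows on opposite diagonal cells, exchanging
  these rows amounts to reversing both of them and then exchanging the two remaining letters.\<close>

lemma place_perm_swap_first_rows:
  fixes a b :: nat
  assumes "4 \<le> d" "single_repeat d u P Q"
    and PQ: "(P = 0 \<and> Q = 3 \<and> a = 1 \<and> b = 2) \<or> (P = 2 \<and> Q = 1 \<and> a = 0 \<and> b = 3)"
  shows "place_perm d u swap_first_rows =
    relabel d (Transposition.transpose (u a) (u b)) (place_perm d u flip_first_rows)"
proof
  fix i
  have unique: "unique_letter d u a" "unique_letter d u b"
    using assms unfolding single_repeat_def by auto
  have lt: "a < d" "b < d" "P < d" and ne: "a \<noteq> b" "P \<noteq> a" "P \<noteq> b" using assms(1) PQ by auto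
  have letters: "u a \<noteq> u b" "u P \<noteq> u a" "u P \<noteq> u b" "u Q = u P"
    using unique lt ne assms(2) unfolding unique_letter_def single_repeat_def by metis+
  have others: "u i \<noteq> u a \<and> u i \<noteq> u b" if "i < d" "4 \<le> i"
    using unique that PQ unfolding unique_letter_def by fastforce
  show "place_perm d u swap_first_rows i =
      relabel d (Transposition.transpose (u a) (u b)) (place_perm d u flip_first_rows) i"
  proof (cases "i < d")
    case False then show ?thesis by (simp add: place_perm_def relabel_def)
  next
    case True
    consider "i = 0" | "i = 1" | "i = 2" | "i = 3" | "4 \<le> i" by linarith
    then show ?thesis
    proof cases
      case 5 then show ?thesis using True others
          by (simp add: swap_first_rows_apply flip_first_rows_apply transpose_def)
    qed (use True assms(1) PQ letters in
        \<open>(elim disjE; simp add: swap_first_rows_apply flip_first_rows_apply transpose_def)+\<close>)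
  qed
qed

lemma row_sym_swap_first_rows_crossing:
  fixes a b :: nat
  assumes f: "alternating n (k + l) f" and u: "u \<in> words n (k + l)" and "2 \<le> l" "l \<le> k"
    and rep: "single_repeat (k + l) u P Q"
    and PQ: "(P = 0 \<and> Q = 3 \<and> a = 1 \<and> b = 2) \<or> (P = 2 \<and> Q = 1 \<and> a = 0 \<and> b = 3)"
  shows "row_sym (k + l) (two_col_row l) f (place_perm (k + l) u swap_first_rows) =
    - row_sym (k + l) (two_col_row l) f u"
proof -
  let ?d = "k + l" and ?R = "perms_preserving (k + l) (two_col_row l)"
  let ?t = "Transposition.transpose (u a) (u b)"
  have d: "4 \<le> ?d" using assms(3,4) by simp
  have ab: "a < ?d" "b < ?d" using PQ d by auto
  have "unique_letter ?d u a" using rep PQ ab unfolding single_repeat_def by auto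
  then have "u a \<noteq> u b" using PQ ab unfolding unique_letter_def by auto
  then have sign_t: "sign ?t = -1" by (simp add: sign_swap_id)
  have t: "?t permutes {..<n}" using words_less[OF u] ab by (intro permutes_swap_id) auto
  have h: "flip_first_rows \<in> ?R" by (rule flip_first_rows_in_row_perms[OF assms(3,4)])
  have "row_sym ?d (two_col_row l) f (place_perm ?d u swap_first_rows) =
      (\<Sum>r\<in>?R. - f (place_perm ?d u (flip_first_rows \<circ> r)))"
    unfolding row_sym_def place_perm_swap_first_rows[OF d rep PQ]
  proof (intro sum.cong refl)
    fix r assume "r \<in> ?R"
    then have rp: "r permutes {..<?d}" by (rule perms_preserving_permutes)
    have hr: "flip_first_rows \<circ> r permutes {..<?d}"
      using perms_preserving_permutes[OF h] rp by (rule permutes_compose[rotated])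
    show "f (place_perm ?d (relabel ?d ?t (place_perm ?d u flip_first_rows)) r) =
        - f (place_perm ?d u (flip_first_rows \<circ> r))"
      using alternatingD[OF f place_perm_in_words[OF u hr] t] sign_t rp
      by (simp add: place_perm_relabel place_perm_place_perm)
  qed
  also have "\<dots> = - row_sym ?d (two_col_row l) f u"
    unfolding row_sym_def sum_negf
    using sum_perms_preserving_comp_left[OF h, of "\<lambda>r. f (place_perm ?d u r)"] by simp
  finally show ?thesis .
qed

text \<open>Exchanging the first two rows is a column permutation of sign \<open>+1\<close> that negates the row
  sums of a word with a single repeated letter, so the coefficient vanishes. If a two-cell row
  avoids the repeated letter, both row sums are \<open>0\<close>; otherwise the repeated letter occupies
  opposite corners of the first two rows.\<close>

lemma row_sym_swap_first_rows:
  assumes f: "alternating n (k + l) f" and u: "u \<in> words n (k + l)" and l: "2 \<le> l" "l \<le> k"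
    and "P < k + l" "Q < k + l" "two_col_col l P = 0" "two_col_col l Q = 1"
    and rep: "single_repeat (k + l) u P Q"
  shows "row_sym (k + l) (two_col_row l) f (place_perm (k + l) u swap_first_rows) =
    - row_sym (k + l) (two_col_row l) f u"
proof (cases "\<exists>m<l. {2 * m, 2 * m + 1} \<inter> {P, Q} = {}")
  case True
  then obtain m where m: "m < l" "{2 * m, 2 * m + 1} \<inter> {P, Q} = {}" by blast
  have unique: "unique_letter (k + l) u (2 * m)" "unique_letter (k + l) u (2 * m + 1)"
    using rep m l unfolding single_repeat_def by auto
  define m' where "m' = (if m = 0 then 1 else if m = 1 then 0 else m)"
  have m': "m' < l" "swap_first_rows (2 * m') = 2 * m" "swap_first_rows (2 * m' + 1) = 2 * m + 1"
    using m l unfolding m'_def by (auto simp: swap_first_rows_apply)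
  have s: "swap_first_rows permutes {..<k + l}"
    using swap_first_rows_in_col_perms[OF l] by (rule perms_preserving_permutes)
  have "row_sym (k + l) (two_col_row l) f (place_perm (k + l) u swap_first_rows) = 0"
    using m' l unique
    by (intro row_sym_two_col_eq_0[OF f place_perm_in_words[OF u s] m'(1) l(2)]
        unique_letter_place_perm[OF s]) auto
  moreover have "row_sym (k + l) (two_col_row l) f u = 0"
    by (rule row_sym_two_col_eq_0[OF f u m(1) l(2) unique])
  ultimately show ?thesis by simp
next
  case False
  then have rows: "{0, 1} \<inter> {P, Q} \<noteq> {}" "{2, 3} \<inter> {P, Q} \<noteq> {}"
    using l by (auto dest: spec[of _ 0] spec[of _ 1])
  have "P \<noteq> 1" "P \<noteq> 3" "Q \<noteq> 0" "Q \<noteq> 2"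
    using assms(7,8) l by (auto simp: two_col_col_def split: if_splits)
  then have "(P = 0 \<and> Q = 3) \<or> (P = 2 \<and> Q = 1)" using rows by auto
  then show ?thesis
  proof
    assume "P = 0 \<and> Q = 3"
    then show ?thesis by (intro row_sym_swap_first_rows_crossing[OF f u l rep, of 1 2]) auto
  next
    assume "P = 2 \<and> Q = 1"
    then show ?thesis by (intro row_sym_swap_first_rows_crossing[OF f u l rep, of 0 3]) auto
  qed
qed

lemma two_col_coeff_eq_0_if_single_repeat:
  assumes f: "alternating n (k + l) f" and w: "w \<in> words n (k + l)" and l: "2 \<le> l" "l \<le> k"
    and PQ: "P < k + l" "Q < k + l" "two_col_col l P = 0" "two_col_col l Q = 1"
    and rep: "single_repeat (k + l) w P Q"
  shows "two_col_coeff k l f w = 0"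
proof -
  let ?d = "k + l" and ?C = "perms_preserving (k + l) (two_col_col l)"
  have s: "swap_first_rows \<in> ?C" by (rule swap_first_rows_in_col_perms[OF l])
  have "two_col_coeff k l f w =
      (\<Sum>c\<in>?C. of_int (sign (c \<circ> swap_first_rows)) *
         row_sym ?d (two_col_row l) f (place_perm ?d w (c \<circ> swap_first_rows)))"
    unfolding young_coeff_def by (rule sum_perms_preserving_comp_right[OF s, symmetric])
  also have "\<dots> = (\<Sum>c\<in>?C. - (of_int (sign c) * row_sym ?d (two_col_row l) f (place_perm ?d w c)))"
  proof (intro sum.cong refl)
    fix c assume c: "c \<in> ?C"
    have cp: "c permutes {..<?d}" using c by (rule perms_preserving_permutes)
    have "sign (c \<circ> swap_first_rows) = sign c"
      using sign_compose[OF perms_preserving_permutation[OF c] perms_preserving_permutation[OF s]]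
      by (simp add: sign_swap_first_rows)
    moreover have "two_col_col l (inv c P) = 0" "two_col_col l (inv c Q) = 1"
      using perms_preserving_preserves[OF inv_in_perms_preserving[OF c]] PQ by auto
    moreover have "inv c P < ?d" "inv c Q < ?d"
      using PQ by (auto intro: permutes_lessThan_less[OF permutes_inv[OF cp]])
    ultimately show "of_int (sign (c \<circ> swap_first_rows)) *
        row_sym ?d (two_col_row l) f (place_perm ?d w (c \<circ> swap_first_rows)) =
        - (of_int (sign c) * row_sym ?d (two_col_row l) f (place_perm ?d w c))"
      using row_sym_swap_first_rows[OF f place_perm_in_words[OF w cp] l _ _ _ _
          single_repeat_place_perm[OF cp PQ(1,2) rep]] perms_preserving_permutes[OF s]
      by (simp add: place_perm_place_perm)
  qed
  also have "\<dots> = - two_col_coeff k l f w" by (simp add: young_coeff_def sum_negf)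
  finally show ?thesis by simp
qed

lemma card_ge_2E:
  assumes "2 \<le> card A"
  obtains a b where "a \<in> A" "b \<in> A" "a \<noteq> b"
proof -
  have "finite A" "\<not> card A \<le> Suc 0" using assms card.infinite by fastforce+
  then show ?thesis using that card_le_Suc0_iff_eq[of A] by blast
qed

lemma letter_positions_two_col:
  assumes "inj_on w (left_col k l)" "inj_on w (right_col k l)"
    and "P \<in> left_col k l" "Q \<in> right_col k l" "w P = a" "w Q = a"
  shows "{j. j < k + l \<and> w j = a} = {P, Q}"
proof
  show "{P, Q} \<subseteq> {j. j < k + l \<and> w j = a}"
    using assms(3-6) by (auto simp: left_col_def right_col_def)
  show "{j. j < k + l \<and> w j = a} \<subseteq> {P, Q}"
  proof
    fix j assume "j \<in> {j. j < k + l \<and> w j = a}"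
    then have "j \<in> left_col k l \<union> right_col k l" "w j = a" using left_col_Un_right_col by auto
    then show "j \<in> {P, Q}" using assms by (auto dest: inj_onD)
  qed
qed

text \<open>A word escapes all cancellations above only if its columns carry \<open>k\<close> and \<open>l\<close> distinct
  letters, together all but at most one of the \<open>n\<close> letters, with at most one letter in common;
  the last two cancellations then leave only \<open>l = 0\<close> and \<open>l = 1\<close>, and in both cases
  \<open>k \<ge> n - 1\<close>.\<close>

lemma two_col_coeff_eq_0:
  assumes f: "alternating n (k + l) f" and w: "w \<in> words n (k + l)" and lk: "l \<le> k" and "k \<le> n"
    and exceptional: "(k, l) \<notin> {(n - 1, 0), (n, 0), (n - 1, 1), (n, 1)}"
  shows "two_col_coeff k l f w = 0"
proof (cases "inj_on w (left_col k l) \<and> inj_on w (right_col k l)")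
  case False
  then obtain p q
    where "p \<noteq> q" "p < k + l" "q < k + l" "two_col_col l p = two_col_col l q" "w p = w q"
    unfolding inj_on_def left_col_def right_col_def by auto
  then show ?thesis by (rule young_coeff_eq_0_if_column_repeat[OF w])
next
  case True
  let ?d = "k + l" and ?A = "w ` left_col k l" and ?B = "w ` right_col k l"
  have inj: "inj_on w (left_col k l)" "inj_on w (right_col k l)" using True by auto
  have fin: "finite ?A" "finite ?B" by (simp_all add: left_col_def right_col_def)
  have AB: "?A \<union> ?B = w ` {..<?d}" by (simp flip: left_col_Un_right_col add: image_Un)
  have card_AB: "card (?A \<union> ?B) + card (?A \<inter> ?B) = k + l"
    using card_Un_Int[OF fin] inj card_left_col[OF lk] card_right_col[OF lk]
    by (simp add: card_image)
  consider (shared_two) "2 \<le> card (?A \<inter> ?B)" | (missing_two) "card (?A \<union> ?B) + 2 \<le> n"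
    | (disjoint) "?A \<inter> ?B = {}" "n \<le> card (?A \<union> ?B) + 1"
    | (shared_one) "card (?A \<inter> ?B) = 1" "n \<le> card (?A \<union> ?B) + 1"
    using fin by (cases "2 \<le> card (?A \<inter> ?B)"; cases "card (?A \<union> ?B) + 2 \<le> n";
        cases "card (?A \<inter> ?B) = 0") auto
  then show ?thesis
  proof cases
    case shared_two
    then obtain a b where a: "a \<in> ?A \<inter> ?B" and b: "b \<in> ?A \<inter> ?B" and "a \<noteq> b" by (rule card_ge_2E)
    obtain P Q where PQ: "P \<in> left_col k l" "Q \<in> right_col k l" "w P = a" "w Q = a"
      using a by (metis IntE imageE)
    obtain P' Q' where PQ': "P' \<in> left_col k l" "Q' \<in> right_col k l" "w P' = b" "w Q' = b"
      using b by (metis IntE imageE)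
    show ?thesis
    proof (rule young_coeff_eq_0_if_two_letters_shared[OF f w _ _ \<open>a \<noteq> b\<close>])
      show "{j. j < ?d \<and> w j = a} = {P, Q}" "{j. j < ?d \<and> w j = b} = {P', Q'}"
        using letter_positions_two_col[OF inj] PQ PQ' by simp_all
      show "two_col_col l P = two_col_col l P'" "two_col_col l Q = two_col_col l Q'"
        "two_col_col l P \<noteq> two_col_col l Q"
        using PQ PQ' by (simp_all add: left_col_def right_col_def)
    qed
  next
    case missing_two
    then have "2 \<le> card ({..<n} - w ` {..<?d})"
      using AB words_less[OF w] by (subst card_Diff_subset) auto
    then obtain a b where "a \<in> {..<n} - w ` {..<?d}" "b \<in> {..<n} - w ` {..<?d}" "a \<noteq> b"
      by (rule card_ge_2E)
    then show ?thesis by (intro young_coeff_eq_0_if_two_letters_unused[OF f w]) auto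
  next
    case disjoint
    have "l \<noteq> 0" using disjoint card_AB exceptional \<open>k \<le> n\<close> by auto
    moreover have "inj_on w {..<?d}"
      using inj disjoint by (simp flip: left_col_Un_right_col add: inj_on_Un) blast
    ultimately show ?thesis
      using lk by (intro young_coeff_eq_0_if_inj[OF f w, of 0 1]) (auto simp: two_col_row_def)
  next
    case shared_one
    obtain x where x: "?A \<inter> ?B = {x}" using shared_one(1) by (rule card_1_singletonE)
    then have "x \<in> ?A" "x \<in> ?B" by auto
    then obtain P Q where PQ: "P \<in> left_col k l" "Q \<in> right_col k l" "w P = x" "w Q = x"
      by (metis imageE)
    have "l \<noteq> 0" using PQ(2) by (auto simp: right_col_def two_col_col_def split: if_splits)
    moreover have "l \<noteq> 1" using shared_one card_AB exceptional \<open>k \<le> n\<close> by auto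
    ultimately have l: "2 \<le> l" by simp
    have "single_repeat ?d w P Q"
      unfolding single_repeat_def
    proof (intro conjI allI impI)
      fix j assume j: "j < ?d" "j \<noteq> P \<and> j \<noteq> Q"
      have "w j \<noteq> x"
        using j PQ letter_positions_two_col[OF inj PQ] by blast
      then show "unique_letter ?d w j"
        using unique_letter_if_not_shared[OF inj left_col_Un_right_col j(1)] x by blast
    qed (use PQ in simp)
    moreover have "P < ?d" "Q < ?d" "two_col_col l P = 0" "two_col_col l Q = 1"
      using PQ by (simp_all add: left_col_def right_col_def)
    ultimately show ?thesis
      using two_col_coeff_eq_0_if_single_repeat[OF f w l lk] by blast
  qed
qed

lemma perms_preserving_ident: "perms_preserving d (\<lambda>x. x) = {id}"
proof -
  have "p = id" if "p \<in> perms_preserving d (\<lambda>x. x)" for p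
  proof
    fix x
    show "p x = id x"
      using perms_preserving_preserves[OF that]
        permutes_not_in[OF perms_preserving_permutes[OF that]]
      by (cases "x < d") auto
  qed
  then show ?thesis using id_in_perms_preserving by blast
qed

lemma place_perm_id: "w \<in> words n d \<Longrightarrow> place_perm d w id = w"
  by (rule words_eqI[OF place_perm_in_words[OF _ permutes_id]]) auto

definition distinct_word :: "nat \<Rightarrow> nat \<Rightarrow> nat" where
  "distinct_word k = restrict (\<lambda>i. i) {..<k}"

lemma distinct_word_in_words: "k \<le> n \<Longrightarrow> distinct_word k \<in> words n k"
  by (rule words_memI) (auto simp: distinct_word_def)

lemma one_col_coeff_eq_0_if_eq_0_at_distinct_word:
  assumes l: "l = 0" and "k \<le> n" and f: "alternating n (k + l) f"
    and at_w0: "two_col_coeff k l f (distinct_word k) = 0" and w: "w \<in> words n (k + l)"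
  shows "two_col_coeff k l f w = 0"
proof (cases "inj_on w {..<k}")
  case False
  then obtain p q where "p \<noteq> q" "p < k" "q < k" "w p = w q" unfolding inj_on_def by auto
  moreover have "two_col_col l p = two_col_col l q" using l by (simp add: two_col_col_def)
  ultimately show ?thesis
    using l by (intro young_coeff_eq_0_if_column_repeat[OF w, where p = p and q = q]) simp_all
next
  case True
  have w0: "distinct_word k \<in> words n (k + l)" using distinct_word_in_words[OF \<open>k \<le> n\<close>] l by simp
  have "inj_on (distinct_word k) {..<k}" "distinct_word k ` {..<k} \<subseteq> {..<n}" "w ` {..<k} \<subseteq> {..<n}"
    using \<open>k \<le> n\<close> words_less[OF w] l by (auto simp: distinct_word_def inj_on_def)
  then obtain t where t: "t permutes {..<n}" "\<forall>j\<in>{..<k}. t (distinct_word k j) = w j"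
    using ex_permutes_extend_inj[of "{..<k}" "distinct_word k" w n] True by blast
  have "relabel (k + l) t (distinct_word k) = w"
    by (rule words_eqI[OF relabel_in_words[OF w0 t(1)] w]) (use t(2) l in auto)
  then show ?thesis
    using young_coeff_relabel[OF f w0 t(1), where col = "two_col_col l" and row = "two_col_row l"]
      at_w0
    by simp
qed

lemma one_col_coeff_distinct_word_neq_0:
  assumes l: "l = 0" and "k \<le> n" "n \<le> k + 1"
  shows "two_col_coeff k l (antisymmetrize n (k + l) (\<lambda>v. of_bool (v = distinct_word k)))
    (distinct_word k) \<noteq> 0"
proof -
  let ?w = "distinct_word k" and ?f = "antisymmetrize n (k + l) (\<lambda>v. of_bool (v = distinct_word k))"
  let ?C = "perms_preserving (k + l) (two_col_col l)"
  have w: "?w \<in> words n (k + l)" using distinct_word_in_words[OF \<open>k \<le> n\<close>] l by simp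
  have "?w ` {..<k + l} = {..<k}" using l by (auto simp: distinct_word_def)
  then have f_w: "?f ?w = 1" using assms by (intro antisymmetrize_indicator_self[OF w]) simp
  have "two_col_row l = (\<lambda>x. x)" using l by (simp add: two_col_row_def fun_eq_iff)
  then have R: "perms_preserving (k + l) (two_col_row l) = {id}"
    by (simp add: perms_preserving_ident)
  have "of_int (sign c) * ?f (place_perm (k + l) (place_perm (k + l) ?w c) id) = 1"
    if c: "c \<in> ?C" for c
  proof -
    have cp: "c permutes {..<k + l}" using c by (rule perms_preserving_permutes)
    have "inj_on ?w {..<k + l}" using l by (simp add: distinct_word_def inj_on_def)
    then have "?f (place_perm (k + l) ?w c) = of_int (sign c) * ?f ?w"
      by (intro alternating_place_perm[OF alternating_antisymmetrize w cp]) auto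
    then show ?thesis
      using f_w place_perm_id[OF place_perm_in_words[OF w cp]] by (simp add: of_int_sign_mult_self)
  qed
  then have "two_col_coeff k l ?f ?w = of_nat (card ?C)"
    by (simp add: young_coeff_double_sum R)
  then show ?thesis using card_perms_preserving_pos[of "k + l" "two_col_col l"] by simp
qed

lemma left_col_hook: "left_col k 1 = {..<k + 1} - {1}"
  by (auto simp: left_col_def two_col_col_def)

lemma col_perm_hook_fixes_1:
  assumes c: "c \<in> perms_preserving (k + 1) (two_col_col 1)"
  shows "c 1 = 1"
proof (cases "k = 0")
  case True
  then show ?thesis using permutes_not_in[OF perms_preserving_permutes[OF c]] by simp
next
  case False
  then have "two_col_col 1 (c 1) = 1" "c 1 < k + 1"
    using perms_preserving_preserves[OF c, of 1]
      permutes_lessThan_less[OF perms_preserving_permutes[OF c]]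
    by (simp_all add: two_col_col_def)
  then show ?thesis by (auto simp: two_col_col_def split: if_splits)
qed

lemma col_perm_hook_permutes_left_col:
  assumes c: "c \<in> perms_preserving (k + 1) (two_col_col 1)"
  shows "c permutes left_col k 1"
proof -
  have "c x = x" if "x \<notin> left_col k 1" for x
    using that col_perm_hook_fixes_1[OF c] permutes_not_in[OF perms_preserving_permutes[OF c]]
    unfolding left_col_hook by (cases "x = 1") auto
  moreover have "\<forall>y. \<exists>!x. c x = y"
    using perms_preserving_permutes[OF c] unfolding permutes_def by blast
  ultimately show ?thesis unfolding permutes_def by blast
qed

lemma row_perm_hook:
  assumes r: "r \<in> perms_preserving (k + 1) (two_col_row 1)" and "x < k + 1"
  shows "r x < 2 \<longleftrightarrow> x < 2" and "2 \<le> x \<Longrightarrow> r x = x"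
  using perms_preserving_preserves[OF r assms(2)] by (auto simp: two_col_row_def split: if_splits)

definition paired_word :: "nat \<Rightarrow> nat \<Rightarrow> nat" where
  "paired_word k = restrict (\<lambda>j. if j \<le> 1 then 0 else j - 1) {..<k + 1}"

lemma paired_word_apply: "j < k + 1 \<Longrightarrow> paired_word k j = (if j \<le> 1 then 0 else j - 1)"
  by (simp add: paired_word_def)

lemma paired_word_in_words: "k \<le> n \<Longrightarrow> 1 \<le> k \<Longrightarrow> paired_word k \<in> words n (k + 1)"
  by (rule words_memI) (auto simp: paired_word_def)

lemma inj_on_paired_word: "inj_on (paired_word k) (left_col k 1)"
  unfolding left_col_hook by (rule inj_onI) (auto simp: paired_word_apply split: if_splits)

lemma paired_word_image: "1 \<le> k \<Longrightarrow> paired_word k ` {..<k + 1} = {..<k}"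
proof (intro set_eqI iffI)
  fix x assume "x \<in> {..<k}" "1 \<le> k"
  then show "x \<in> paired_word k ` {..<k + 1}"
    by (intro image_eqI[of _ _ "if x = 0 then 0 else x + 1"]) (auto simp: paired_word_apply)
qed (auto simp: paired_word_apply)

lemma hook_coeff_eq_0_if_eq_0_at_paired_word:
  assumes l: "l = 1" and "k \<le> n" "1 \<le> k" and f: "alternating n (k + l) f"
    and at_w0: "two_col_coeff k l f (paired_word k) = 0" and w: "w \<in> words n (k + l)"
  shows "two_col_coeff k l f w = 0"
proof (cases "inj_on w (left_col k l)")
  case False
  then obtain p q where "p \<noteq> q" "p \<in> left_col k l" "q \<in> left_col k l" "w p = w q"
    unfolding inj_on_def by auto
  moreover have "p < k + l" "q < k + l" "two_col_col l p = two_col_col l q"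
    using calculation by (simp_all add: left_col_def)
  ultimately show ?thesis by (intro young_coeff_eq_0_if_column_repeat[OF w, where p = p and q = q])
next
  case inj: True
  have left: "left_col k l = {..<k + l} - {1}" using left_col_hook l by simp
  show ?thesis
  proof (cases "w 1 \<in> w ` left_col k l")
    case False
    then have "w 1 \<notin> w ` (left_col k l - {1})" by blast
    then have "inj_on w (insert 1 (left_col k l))" using inj by simp
    moreover have "insert 1 (left_col k l) = {..<k + l}"
      using left l \<open>1 \<le> k\<close> by (simp add: insert_absorb)
    ultimately have "inj_on w {..<k + l}" by metis
    then show ?thesis
      using l \<open>1 \<le> k\<close>
      by (intro young_coeff_eq_0_if_inj[OF f w, of 0 1]) (auto simp: two_col_row_def)
  next
    case True
    then obtain p where p: "p < k + l" "p \<noteq> 1" "w 1 = w p" using left by auto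
    let ?c = "Transposition.transpose 0 p" and ?w0 = "paired_word k"
    have c: "?c \<in> perms_preserving (k + l) (two_col_col l)"
      using p l by (intro transpose_in_perms_preserving) (auto simp: two_col_col_def)
    have cp: "?c permutes {..<k + l}" using c by (rule perms_preserving_permutes)
    let ?u = "place_perm (k + l) w ?c"
    have u: "?u \<in> words n (k + l)" using w cp by (rule place_perm_in_words)
    have c_left: "?c x \<in> left_col k l" if "x \<in> left_col k l" for x
      using that perms_preserving_preserves[OF c] permutes_lessThan_less[OF cp]
      by (simp add: left_col_def)
    have inj_u: "inj_on ?u (left_col k l)"
    proof (rule inj_onI)
      fix x y assume xy: "x \<in> left_col k l" "y \<in> left_col k l" "?u x = ?u y"
      then have "?c x = ?c y" using c_left inj_onD[OF inj] by (simp add: left_col_def)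
      then show "x = y" using permutes_inj[OF cp] by (simp add: inj_eq)
    qed
    have w0: "?w0 \<in> words n (k + l)" using paired_word_in_words[OF \<open>k \<le> n\<close> \<open>1 \<le> k\<close>] l by simp
    have "left_col k l \<subseteq> {..<k + l}" by (auto simp: left_col_def)
    then have img: "?w0 ` left_col k l \<subseteq> {..<n}" "?u ` left_col k l \<subseteq> {..<n}"
      using words_less[OF w0] words_less[OF u] by auto
    have fin: "finite (left_col k l)" and inj_w0: "inj_on ?w0 (left_col k l)"
      using inj_on_paired_word l by (simp_all add: left_col_def)
    obtain t where t: "t permutes {..<n}" "\<forall>j\<in>left_col k l. t (?w0 j) = ?u j"
      using ex_permutes_extend_inj[OF fin inj_w0 inj_u img] by blast
    have "relabel (k + l) t ?w0 = ?u"
    proof (rule words_eqI[OF relabel_in_words[OF w0 t(1)] u])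
      fix j assume j: "j < k + l"
      have "0 \<in> left_col k l" using left \<open>1 \<le> k\<close> l by auto
      then have "t (?w0 1) = ?u 1"
        using t(2) p j l \<open>1 \<le> k\<close> by (auto simp: paired_word_apply transpose_def)
      then show "relabel (k + l) t ?w0 j = ?u j" using t(2) j left by (cases "j = 1") auto
    qed
    then have "two_col_coeff k l f ?u = 0"
      using young_coeff_relabel[OF f w0 t(1), where col = "two_col_col l" and row = "two_col_row l"]
        at_w0
      by simp
    then show ?thesis by (simp add: young_coeff_place_perm[OF c])
  qed
qed

text \<open>For the coefficient at the paired word, a column permutation moving cell \<open>0\<close> puts two
  different letters into the first row, and no relabelling of the paired word does that.\<close>

lemma hook_coeff_term:
  assumes l: "l = 1" and "k \<le> n" "1 \<le> k" "n \<le> k + 1"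
    and c: "c \<in> perms_preserving (k + l) (two_col_col l)"
    and r: "r \<in> perms_preserving (k + l) (two_col_row l)"
  shows "of_int (sign c) * antisymmetrize n (k + l) (\<lambda>v. of_bool (v = paired_word k))
    (place_perm (k + l) (place_perm (k + l) (paired_word k) c) r) = of_bool (c 0 = 0)"
proof -
  let ?w = "paired_word k" and ?f = "antisymmetrize n (k + l) (\<lambda>v. of_bool (v = paired_word k))"
  let ?v = "place_perm (k + l) (place_perm (k + l) ?w c) r"
  have w: "?w \<in> words n (k + l)" using paired_word_in_words[OF assms(2,3)] l by simp
  have cp: "c permutes {..<k + l}" using c by (rule perms_preserving_permutes)
  have rp: "r permutes {..<k + l}" using r by (rule perms_preserving_permutes)
  have c1: "c 1 = 1" using col_perm_hook_fixes_1 c l by simp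
  have r_small: "r x < 2 \<longleftrightarrow> x < 2" and r_big: "2 \<le> x \<Longrightarrow> r x = x" if "x < k + l" for x
    using row_perm_hook[of r k x] r that l by simp_all
  show ?thesis
  proof (cases "c 0 = 0")
    case True
    have "?v = place_perm (k + l) ?w c"
    proof
      fix j
      show "?v j = place_perm (k + l) ?w c j"
      proof (cases "j < k + l \<and> j < 2")
        case True
        then have "r j < 2" "r j < k + l" using r_small permutes_lessThan_less[OF rp] by auto
        then have "c (r j) \<le> 1" "c j \<le> 1" using True \<open>c 0 = 0\<close> c1 by (auto simp: less_2_cases_iff)
        moreover have "c (r j) < k + l" "c j < k + l"
          using permutes_lessThan_less[OF cp] True \<open>r j < k + l\<close> by auto
        ultimately show ?thesis using True l \<open>r j < k + l\<close> by (simp add: paired_word_apply)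
      qed (use r_big in \<open>auto simp: place_perm_def\<close>)
    qed
    moreover have "?f (place_perm (k + l) ?w c) = of_int (sign c) * ?f ?w"
    proof (rule alternating_place_perm[OF alternating_antisymmetrize w])
      show "c permutes left_col k 1" using col_perm_hook_permutes_left_col c l by simp
      show "inj_on ?w (left_col k 1)" by (rule inj_on_paired_word)
      show "c s = s" if "j < k + l" "j \<notin> left_col k 1" "s \<in> left_col k 1" "?w j = ?w s" for j s
      proof -
        have "j = 1" "s < k + 1" "s \<noteq> 1"
          using that(1-3) l by (auto simp: left_col_def two_col_col_def split: if_splits)
        then have "s = 0" using that(4) \<open>1 \<le> k\<close> by (auto simp: paired_word_apply split: if_splits)
        then show ?thesis using \<open>c 0 = 0\<close> by simp
      qed
    qed (use l in \<open>auto simp: left_col_def\<close>)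
    moreover have "?f ?w = 1"
      using paired_word_image[OF \<open>1 \<le> k\<close>] assms(4) l
      by (intro antisymmetrize_indicator_self[OF w]) simp
    ultimately show ?thesis using True by (simp add: of_int_sign_mult_self)
  next
    case False
    have d: "0 < k + l" "1 < k + l" using assms(3) l by auto
    have "c 0 \<noteq> 1" using c1 permutes_inj[OF cp] False by (metis injD)
    then have "?w (c 0) \<noteq> 0" "?w (c 1) = 0"
      using False c1 permutes_lessThan_less[OF cp d(1)] l by (auto simp: paired_word_apply)
    moreover have "r 0 < 2" "r 1 < 2" "r 0 \<noteq> r 1"
      using r_small d permutes_inj[OF rp] by (auto dest: injD)
    then have "(r 0 = 0 \<and> r 1 = 1) \<or> (r 0 = 1 \<and> r 1 = 0)" by linarith
    moreover have "?v 0 = ?w (c (r 0))" "?v 1 = ?w (c (r 1))"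
      using d permutes_lessThan_less[OF rp] by simp_all
    ultimately have "?v 0 \<noteq> ?v 1" by (elim disjE) simp_all
    have "?f ?v = 0"
    proof (rule antisymmetrize_indicator_eq_0)
      fix \<sigma> assume \<sigma>: "\<sigma> permutes {..<n}"
      show "relabel (k + l) \<sigma> ?v \<noteq> ?w"
      proof
        assume "relabel (k + l) \<sigma> ?v = ?w"
        then have "\<sigma> (?v 0) = \<sigma> (?v 1)"
          using d l by (metis paired_word_apply relabel_apply le_refl zero_le)
        then show False using \<open>?v 0 \<noteq> ?v 1\<close> permutes_inj[OF \<sigma>] by (meson injD)
      qed
    qed
    then show ?thesis using False by simp
  qed
qed

lemma hook_coeff_paired_word_neq_0:
  assumes "l = 1" "k \<le> n" "1 \<le> k" "n \<le> k + 1"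
  shows "two_col_coeff k l (antisymmetrize n (k + l) (\<lambda>v. of_bool (v = paired_word k)))
    (paired_word k) \<noteq> 0"
proof -
  let ?f = "antisymmetrize n (k + l) (\<lambda>v. of_bool (v = paired_word k))"
  let ?C = "perms_preserving (k + l) (two_col_col l)"
    and ?R = "perms_preserving (k + l) (two_col_row l)"
  have "two_col_coeff k l ?f (paired_word k) = (\<Sum>c\<in>?C. \<Sum>r\<in>?R. of_bool (c 0 = 0))"
    unfolding young_coeff_double_sum by (intro sum.cong refl) (rule hook_coeff_term[OF assms])
  also have "\<dots> = of_nat (card ?R * card (?C \<inter> {c. c 0 = 0}))"
    by (simp add: finite_perms_preserving flip: sum_distrib_left)
  finally have "two_col_coeff k l ?f (paired_word k) =
      of_nat (card ?R * card (?C \<inter> {c. c 0 = 0}))" .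
  moreover have "id \<in> ?C \<inter> {c. c 0 = 0}" by (simp add: id_in_perms_preserving)
  then have "card (?C \<inter> {c. c 0 = 0}) \<noteq> 0"
    using finite_perms_preserving by (auto simp: card_eq_0_iff)
  ultimately show ?thesis using card_perms_preserving_pos[of "k + l" "two_col_row l"] by simp
qed

theorem theoremA:
  fixes n k l :: nat
  assumes "2 \<le> n" and "l \<le> k" and "k \<le> n"
  shows "(0 < sign_multiplicity (conj_part [k, l]) n \<longleftrightarrow>
            (k, l) \<in> {(n - 1, 0), (n, 0), (n - 1, 1), (n, 1)})
       \<and> ((k, l) \<in> {(n - 1, 0), (n, 0), (n - 1, 1), (n, 1)} \<longrightarrow>
            sign_multiplicity (conj_part [k, l]) n = 1)"
proof -
  let ?S = "{(n - 1, 0), (n, 0), (n - 1, 1), (n, 1)}"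
  have "sign_multiplicity (conj_part [k, l]) n = 1" if "(k, l) \<in> ?S"
  proof -
    have k: "1 \<le> k" "n \<le> k + 1" and "l = 0 \<or> l = 1" using that assms(1) by auto
    then show ?thesis
    proof (elim disjE)
      assume l: "l = 0"
      have "distinct_word k \<in> words n (k + l)" using distinct_word_in_words[OF assms(3)] l by simp
      then show ?thesis
        using one_col_coeff_distinct_word_neq_0[OF l assms(3) k(2)]
          one_col_coeff_eq_0_if_eq_0_at_distinct_word[OF l assms(3)]
        by (intro sign_multiplicity_two_col_eq_1[OF assms(2) _ alternating_antisymmetrize])
    next
      assume l: "l = 1"
      have "paired_word k \<in> words n (k + l)" using paired_word_in_words[OF assms(3) k(1)] l by simp
      then show ?thesis
        using hook_coeff_paired_word_neq_0[OF l assms(3) k]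
          hook_coeff_eq_0_if_eq_0_at_paired_word[OF l assms(3) k(1)]
        by (intro sign_multiplicity_two_col_eq_1[OF assms(2) _ alternating_antisymmetrize])
    qed
  qed
  moreover have "sign_multiplicity (conj_part [k, l]) n = 0" if "(k, l) \<notin> ?S"
    using two_col_coeff_eq_0[OF _ _ assms(2,3) that]
    by (rule sign_multiplicity_two_col_eq_0[OF assms(2)])
  ultimately show ?thesis by (cases "(k, l) \<in> ?S") auto
qed

end
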